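(* Let $f:\mathbb{R}^N\to[0,\infty)$ be symmetrizable, $f(x)=\phi(h(x'),x_N)$, let $K$ be the Wulff shape of $f$ and $K_h\subset\mathbb{R}^{N-1}$ the Wulff shape of $h$. Then there exists $\alpha:\mathbb{R}\to[0,\infty)$, concave on $\{t:\alpha(t)>0\}$, such that (i) $K_t=\emptyset$ for every $t$ with $\alpha(t)=0$, and (ii) $K_t=\alpha(t)K_h$ for every $t$ with $\alpha(t)\neq 0$. Conversely, let $f:\mathbb{R}^N\to[0,\infty)$ be lower-semicontinuous, convex, positively $1$-homogeneous with $f(x)>0$ for $x\neq 0$, and suppose there exist an open convex set $K_h\subset\mathbb{R}^{N-1}$ and a function $\alpha:\mathbb{R}\to[0,\infty)$, concave on $\{t:\alpha(t)>0\}$, such that the Wulff shape $K$ of $f$ satisfies (i) and (ii). Then $f$ is symmetrizable.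
   Context: Let $N\ge 2$ and write $x=(x',x_N)\in\mathbb{R}^{N-1}\times\mathbb{R}$. For $E\subset\mathbb{R}^N$ and $t\in\mathbb{R}$, $E_t:=\{x'\in\mathbb{R}^{N-1}:(x',t)\in E\}$. For a convex, positively $1$-homogeneous $g:\mathbb{R}^k\to[0,\infty)$ with $g(y)>0$ for $y\neq0$, its Wulff shape is $K_g:=\bigcap_{\nu\in S^{k-1}}\{y\in\mathbb{R}^k:y\cdot\nu<g(\nu)\}$. A convex, positively $1$-homogeneous $f:\mathbb{R}^N\to[0,\infty)$ with $f(x)>0$ for $x\ne0$ is called symmetrizable if there exist lower-semicontinuous functions $h:\mathbb{R}^{N-1}\to[0,\infty)$ and $\phi:[0,\infty)\times\mathbb{R}\to[0,\infty)$ such that $h$ is positively $1$-homogeneous, convex, with $h(x')>0$ for $x'\neq0$, $\phi$ is convex, and $f(x)=\phi(h(x'),x_N)$ for all $x\in\mathbb{R}^N$. *)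

theory Defs
  imports "HOL-Analysis.Analysis"
begin

text \<open>Points of R^N are pairs (x', x_N) with x' in the euclidean space 'a = R^(N-1).\<close>

definition lsc_on :: "'a::topological_space set \<Rightarrow> ('a \<Rightarrow> real) \<Rightarrow> bool" where
  "lsc_on S g \<longleftrightarrow> (\<forall>x\<in>S. \<forall>c. c < g x \<longrightarrow> (\<forall>\<^sub>F y in at x within S. c < g y))"

definition pos_hom1 :: "('a::real_vector \<Rightarrow> real) \<Rightarrow> bool" where
  "pos_hom1 g \<longleftrightarrow> (\<forall>t>0. \<forall>y. g (t *\<^sub>R y) = t * g y)"

definition admissible :: "('a::real_vector \<Rightarrow> real) \<Rightarrow> bool" where
  "admissible g \<longleftrightarrow> convex_on UNIV g \<and> pos_hom1 g \<and> (\<forall>y. 0 \<le> g y) \<and> (\<forall>y. y \<noteq> 0 \<longrightarrow> 0 < g y)"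

definition wulff :: "('a::real_inner \<Rightarrow> real) \<Rightarrow> 'a set" where
  "wulff g = (\<Inter>\<nu>\<in>{\<nu>. norm \<nu> = 1}. {y. inner y \<nu> < g \<nu>})"

definition slice :: "('a \<times> real) set \<Rightarrow> real \<Rightarrow> 'a set" where
  "slice E t = {x'. (x', t) \<in> E}"

definition sym_repr :: "('a::euclidean_space \<times> real \<Rightarrow> real) \<Rightarrow> ('a \<Rightarrow> real) \<Rightarrow> (real \<times> real \<Rightarrow> real) \<Rightarrow> bool" where
  "sym_repr f h \<phi> \<longleftrightarrow>
     lsc_on UNIV h \<and> admissible h \<and>
     lsc_on ({0..} \<times> UNIV) \<phi> \<and> (\<forall>p\<in>{0..} \<times> UNIV. 0 \<le> \<phi> p) \<and> convex_on ({0..} \<times> UNIV) \<phi> \<and>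
     (\<forall>x' xN. f (x', xN) = \<phi> (h x', xN))"

definition symmetrizable :: "('a::euclidean_space \<times> real \<Rightarrow> real) \<Rightarrow> bool" where
  "symmetrizable f \<longleftrightarrow> admissible f \<and> (\<exists>h \<phi>. sym_repr f h \<phi>)"

end

theory Submission
  imports Defs
begin

text \<open>
  Let \<open>h\<degree>\<close> be the polar of \<open>h\<close>, the support function of the level set \<open>{h = 1}\<close>; the Wulff
  shape of \<open>h\<close> is \<open>{h\<degree> < 1}\<close>. If \<open>f(x', x\<^sub>N)\<close> depends on \<open>x'\<close> only through \<open>h(x')\<close>,
  then, since the maximum of \<open>y \<bullet> v\<close> over \<open>{h = r}\<close> is \<open>r h\<degree>(y)\<close>, whether \<open>(y, t)\<close> lies in the
  Wulff shape \<open>K\<close> of \<open>f\<close> depends on \<open>y\<close> only through \<open>h\<degree>(y)\<close>, monotonically. Each nonempty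
  slice \<open>K\<^sub>t\<close> is open, so it is a sublevel set \<open>{h\<degree> < \<alpha>(t)} = \<alpha>(t) K\<^sub>h\<close>, and convexity of \<open>K\<close>
  makes \<open>\<alpha>\<close> concave.

  Conversely, \<open>f\<close> is the support function of \<open>K\<close>. If every nonempty slice of \<open>K\<close> is a positive
  multiple of \<open>K\<^sub>h\<close>, this shows that \<open>f(x', x\<^sub>N)\<close> depends on \<open>x'\<close> only through the support
  function \<open>g\<close> of \<open>K\<^sub>h\<close>, which is admissible since \<open>K\<^sub>h\<close> is a bounded open neighbourhood
  of \<open>0\<close>. Hence \<open>f(x', x\<^sub>N) = \<phi>(g(x'), x\<^sub>N)\<close> with \<open>\<phi>(r, s) = f(r u, s)\<close> for any \<open>u\<close> with
  \<open>g(u) = 1\<close>.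
\<close>

section \<open>Admissible functions\<close>

lemma admissible_scaleR: "admissible g \<Longrightarrow> 0 < t \<Longrightarrow> g (t *\<^sub>R y) = t * g y"
  by (auto simp: admissible_def pos_hom1_def)

lemma admissible_zero: assumes "admissible g" shows "g 0 = 0"
  using admissible_scaleR[OF assms, of 2 0] by simp

lemma admissible_scaleR_nonneg: "admissible g \<Longrightarrow> 0 \<le> t \<Longrightarrow> g (t *\<^sub>R y) = t * g y"
  by (cases "t = 0") (auto simp: admissible_zero admissible_scaleR)

lemma admissible_nonneg: "admissible g \<Longrightarrow> 0 \<le> g y"
  by (auto simp: admissible_def)

lemma admissible_pos: "admissible g \<Longrightarrow> y \<noteq> 0 \<Longrightarrow> 0 < g y"
  by (auto simp: admissible_def)

lemma admissible_eq_0_iff: "admissible g \<Longrightarrow> g y = 0 \<longleftrightarrow> y = 0"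
  using admissible_pos admissible_zero by fastforce

lemma admissible_convex_on: "admissible g \<Longrightarrow> convex_on UNIV g"
  by (auto simp: admissible_def)

lemma admissible_continuous_on:
  fixes g :: "'b::euclidean_space \<Rightarrow> real"
  assumes "admissible g" shows "continuous_on UNIV g"
  using convex_on_continuous[of UNIV g] assms by (auto simp: admissible_def)

lemma admissible_normalize:
  assumes "admissible g" "y \<noteq> 0" shows "g (y /\<^sub>R g y) = 1"
  using admissible_scaleR[OF assms(1), of "inverse (g y)" y] admissible_pos[OF assms] by simp

lemma admissible_exists_eq_1:
  fixes g :: "'b::euclidean_space \<Rightarrow> real"
  assumes "admissible g" obtains u where "g u = 1"
  using admissible_normalize[OF assms nonzero_Basis] nonempty_Basis by blast

lemma admissible_norm_bounds:
  fixes g :: "'b::euclidean_space \<Rightarrow> real"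
  assumes "admissible g"
  shows "\<exists>m>0. \<forall>y. m * norm y \<le> g y" and "\<exists>M. \<forall>y. g y \<le> M * norm y"
proof -
  have cont: "continuous_on (sphere 0 1) g"
    using continuous_on_subset[OF admissible_continuous_on[OF assms]] by blast
  obtain a where a: "a \<in> sphere (0::'b) 1" "\<And>y. y \<in> sphere 0 1 \<Longrightarrow> g a \<le> g y"
    using continuous_attains_inf[OF compact_sphere _ cont] by force
  obtain b where b: "\<And>y. y \<in> sphere (0::'b) 1 \<Longrightarrow> g y \<le> g b"
    using continuous_attains_sup[OF compact_sphere _ cont] by force
  have "a \<noteq> 0" using a(1) by auto
  have hom: "g y = norm y * g (y /\<^sub>R norm y)" for y
    using admissible_scaleR_nonneg[OF assms norm_ge_zero, of y "y /\<^sub>R norm y"]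
    by (cases "y = 0") (auto simp: admissible_zero[OF assms])
  have "g a * norm y \<le> g y" "g y \<le> g b * norm y" for y
    using a(2)[of "y /\<^sub>R norm y"] b[of "y /\<^sub>R norm y"] hom[of y]
    by (cases "y = 0"; simp add: admissible_zero[OF assms] mult.commute mult_left_mono)+
  then show "\<exists>m>0. \<forall>y. m * norm y \<le> g y" "\<exists>M. \<forall>y. g y \<le> M * norm y"
    using admissible_pos[OF assms \<open>a \<noteq> 0\<close>] by blast+
qed

section \<open>Support functions and polars\<close>

definition support_fun :: "'a::real_inner set \<Rightarrow> 'a \<Rightarrow> real" where
  "support_fun S x = (SUP k\<in>S. inner x k)"

lemma bdd_above_inner_image:
  fixes S :: "'a::real_inner set"
  assumes "bounded S" shows "bdd_above ((\<lambda>k. inner x k) ` S)"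
proof -
  obtain B where "\<And>k. k \<in> S \<Longrightarrow> norm k \<le> B" using assms bounded_iff by blast
  then have "inner x k \<le> norm x * B" if "k \<in> S" for k
    using norm_cauchy_schwarz[of x k] mult_left_mono[of "norm k" B "norm x"] that by force
  then show ?thesis by (rule bdd_aboveI2)
qed

lemma inner_le_support_fun: "bounded S \<Longrightarrow> k \<in> S \<Longrightarrow> inner x k \<le> support_fun S x"
  unfolding support_fun_def by (rule cSUP_upper[OF _ bdd_above_inner_image])

lemma support_fun_le: "S \<noteq> {} \<Longrightarrow> (\<And>k. k \<in> S \<Longrightarrow> inner x k \<le> c) \<Longrightarrow> support_fun S x \<le> c"
  unfolding support_fun_def by (rule cSUP_least)

lemma less_support_fun_iff:
  "bounded S \<Longrightarrow> S \<noteq> {} \<Longrightarrow> c < support_fun S x \<longleftrightarrow> (\<exists>k\<in>S. c < inner x k)"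
  unfolding support_fun_def by (rule less_cSUP_iff[OF _ bdd_above_inner_image])

lemma support_fun_attained:
  fixes S :: "'a::euclidean_space set"
  assumes "compact S" "S \<noteq> {}" obtains k where "k \<in> S" "support_fun S x = inner x k"
proof -
  obtain k where k: "k \<in> S" "\<And>k'. k' \<in> S \<Longrightarrow> inner x k' \<le> inner x k"
    using continuous_attains_sup[OF assms, of "inner x"]
      continuous_on_inner[OF continuous_on_const continuous_on_id] by blast
  then have "support_fun S x = inner x k"
    using support_fun_le[OF assms(2)] inner_le_support_fun[OF compact_imp_bounded[OF assms(1)]]
    by (meson order_antisym)
  with k(1) show ?thesis by (rule that)
qed

lemma admissible_support_fun:
  fixes S :: "'a::euclidean_space set"
  assumes S: "bounded S" "S \<noteq> {}" and pos: "\<And>x. x \<noteq> 0 \<Longrightarrow> \<exists>k\<in>S. 0 < inner x k"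
  shows "admissible (support_fun S)"
proof -
  note upper = inner_le_support_fun[OF S(1)] and least = support_fun_le[OF S(2)]
  have "convex_on UNIV (support_fun S)"
  proof (rule convex_onI)
    fix u :: real and x y assume u: "0 < u" "u < 1"
    show "support_fun S ((1 - u) *\<^sub>R x + u *\<^sub>R y) \<le> (1 - u) * support_fun S x + u * support_fun S y"
      using upper[of _ x] upper[of _ y] u
      by (intro least) (simp add: inner_add_left add_mono mult_left_mono)
  qed simp
  moreover have "support_fun S (t *\<^sub>R y) = t * support_fun S y" if t: "t > 0" for t y
  proof (rule antisym)
    show "support_fun S (t *\<^sub>R y) \<le> t * support_fun S y"
      using upper[of _ y] t by (intro least) (simp add: mult_left_mono)
    have "support_fun S y \<le> support_fun S (t *\<^sub>R y) / t"
      using upper[of _ "t *\<^sub>R y"] t by (intro least) (simp add: field_simps)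
    then show "t * support_fun S y \<le> support_fun S (t *\<^sub>R y)"
      using t by (simp add: field_simps)
  qed
  moreover have "0 < support_fun S x" if "x \<noteq> 0" for x
    using pos[OF that] less_support_fun_iff[OF S] by blast
  moreover have "support_fun S 0 = 0"
    using S(2) upper[of _ 0] by (auto intro!: antisym least)
  ultimately show ?thesis
    unfolding admissible_def pos_hom1_def by (metis order.refl less_imp_le)
qed

definition polar :: "('a::real_inner \<Rightarrow> real) \<Rightarrow> 'a \<Rightarrow> real" where
  "polar g = support_fun {u. g u = 1}"

context
  fixes g :: "'a::euclidean_space \<Rightarrow> real"
  assumes g: "admissible g"
begin

lemma compact_level_1: "compact {u. g u = 1}"
proof -
  obtain m where m: "0 < m" "\<And>y. m * norm y \<le> g y"
    using admissible_norm_bounds(1)[OF g] by blast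
  have "norm u \<le> 1 / m" if "g u = 1" for u
    using m(1) m(2)[of u] that by (simp add: le_divide_eq mult.commute)
  then have "bounded {u. g u = 1}" unfolding bounded_iff by blast
  moreover have "closed {u. g u = 1}"
    using closed_Collect_eq[OF admissible_continuous_on[OF g] continuous_on_const] .
  ultimately show ?thesis using compact_eq_bounded_closed by blast
qed

lemma level_1_nonempty: "{u. g u = 1} \<noteq> {}"
  using admissible_exists_eq_1[OF g] by blast

lemma admissible_polar: "admissible (polar g)"
  unfolding polar_def
proof (rule admissible_support_fun[OF compact_imp_bounded[OF compact_level_1] level_1_nonempty])
  fix x :: 'a assume "x \<noteq> 0"
  then show "\<exists>k\<in>{u. g u = 1}. 0 < inner x k"
    using admissible_normalize[OF g] admissible_pos[OF g] by force
qed

lemma inner_le_polar: "inner x u \<le> g u * polar g x"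
proof (cases "u = 0")
  case False
  have "inner x (u /\<^sub>R g u) \<le> polar g x"
    unfolding polar_def using admissible_normalize[OF g False]
    by (intro inner_le_support_fun compact_imp_bounded[OF compact_level_1]) simp
  then show ?thesis using admissible_pos[OF g False] by (simp add: field_simps)
qed (simp add: admissible_zero[OF g])

lemma polar_attained:
  assumes "0 \<le> r" obtains u where "g u = r" "inner x u = r * polar g x"
proof -
  obtain k where "g k = 1" "polar g x = inner x k"
    using support_fun_attained[OF compact_level_1 level_1_nonempty] unfolding polar_def by blast
  then show ?thesis
    using that[of "r *\<^sub>R k"] admissible_scaleR_nonneg[OF g assms] by simp
qed

lemma mem_wulff_iff: "y \<in> wulff g \<longleftrightarrow> (\<forall>w. w \<noteq> 0 \<longrightarrow> inner y w < g w)"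
proof
  assume "\<forall>w. w \<noteq> 0 \<longrightarrow> inner y w < g w"
  then show "y \<in> wulff g"
    unfolding wulff_def by (auto simp del: norm_eq_zero) (metis norm_zero zero_neq_one)
next
  assume y: "y \<in> wulff g"
  show "\<forall>w. w \<noteq> 0 \<longrightarrow> inner y w < g w"
  proof (intro allI impI)
    fix w :: 'a assume "w \<noteq> 0"
    then have "norm (w /\<^sub>R norm w) = 1" by simp
    then have "inner y (w /\<^sub>R norm w) < g (w /\<^sub>R norm w)"
      using y unfolding wulff_def by blast
    then show "inner y w < g w"
      using admissible_scaleR[OF g, of "norm w" "w /\<^sub>R norm w"] \<open>w \<noteq> 0\<close>
      by (simp add: field_simps)
  qed
qed

lemma wulff_eq_polar_less: "wulff g = {y. polar g y < 1}"
proof (intro set_eqI iffI)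
  fix y assume "y \<in> wulff g"
  moreover obtain u where "g u = 1" "inner y u = polar g y"
    using polar_attained[of 1 y] by auto
  moreover have "u \<noteq> 0" using \<open>g u = 1\<close> admissible_zero[OF g] by auto
  ultimately show "y \<in> {y. polar g y < 1}" by (auto simp: mem_wulff_iff)
next
  fix y assume y: "y \<in> {y. polar g y < 1}"
  have "inner y w < g w" if "w \<noteq> 0" for w
  proof -
    have "inner y w \<le> g w * polar g y" by (rule inner_le_polar)
    also have "\<dots> < g w" using y admissible_pos[OF g that] by simp
    finally show ?thesis .
  qed
  then show "y \<in> wulff g" by (simp add: mem_wulff_iff)
qed

lemma open_wulff: "open (wulff g)"
  unfolding wulff_eq_polar_less
  by (rule open_Collect_less[OF admissible_continuous_on[OF admissible_polar, simplified]
        continuous_on_const])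

lemma convex_wulff: "convex (wulff g)"
proof -
  have "convex {y. inner y \<nu> < c}" for \<nu> c
    using convex_halfspace_lt[of \<nu> c] by (simp add: inner_commute)
  then show ?thesis unfolding wulff_def by (intro convex_INT ballI)
qed

lemma bounded_wulff: "bounded (wulff g)"
proof -
  obtain m where m: "0 < m" "\<And>y. m * norm y \<le> polar g y"
    using admissible_norm_bounds(1)[OF admissible_polar] by blast
  have "norm y \<le> 1 / m" if "polar g y < 1" for y
  proof -
    have "m * norm y \<le> 1" using that m(2)[of y] by linarith
    then show ?thesis using m(1) by (simp add: le_divide_eq mult.commute)
  qed
  then show ?thesis unfolding wulff_eq_polar_less by (auto simp: bounded_iff)
qed

lemma zero_in_wulff: "0 \<in> wulff g"
  using admissible_zero[OF admissible_polar] by (simp add: wulff_eq_polar_less)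

lemma inner_le_if_mem_wulff: "y \<in> wulff g \<Longrightarrow> inner y w \<le> g w"
  using admissible_zero[OF g] by (cases "w = 0") (auto simp: mem_wulff_iff less_imp_le)

end

lemma sublevel_less_eq_scaleR:
  assumes "admissible D" "0 < a"
  shows "{y. D y < a} = (\<lambda>y. a *\<^sub>R y) ` {y. D y < 1}"
proof (intro set_eqI iffI)
  fix y assume "y \<in> {y. D y < a}"
  moreover have "D (inverse a *\<^sub>R y) = D y / a"
    using admissible_scaleR[OF assms(1), of "inverse a" y] assms(2) by (simp add: field_simps)
  ultimately have "inverse a *\<^sub>R y \<in> {y. D y < 1}" "y = a *\<^sub>R (inverse a *\<^sub>R y)"
    using assms(2) by simp_all
  then show "y \<in> (\<lambda>y. a *\<^sub>R y) ` {y. D y < 1}" by blast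
qed (use admissible_scaleR[OF assms] assms(2) in auto)

lemma admissible_subgradient:
  fixes g :: "'a::euclidean_space \<Rightarrow> real"
  assumes g: "admissible g"
  obtains p where "\<And>v. inner p v \<le> g v" "g w \<le> inner p w"
proof (cases "w = 0")
  case True
  then show ?thesis using that[of 0] admissible_nonneg[OF g] admissible_zero[OF g] by simp
next
  case False
  define C where "C = {v. g v < 1}"
  have "convex C" unfolding C_def convex_def
    using convex_lower[OF admissible_convex_on[OF g]] by (smt (verit, best) UNIV_I mem_Collect_eq)
  moreover have "0 \<in> C" "w /\<^sub>R g w \<notin> C"
    using admissible_zero[OF g] admissible_normalize[OF g False] by (simp_all add: C_def)
  ultimately obtain a b
    where ab: "a \<noteq> 0" "\<And>v. v \<in> C \<Longrightarrow> inner a v \<le> b" "b \<le> inner a (w /\<^sub>R g w)"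
    using separating_hyperplane_sets[OF _ convex_singleton, of C "w /\<^sub>R g w"] by blast
  have ga: "0 < g a" using admissible_pos[OF g ab(1)] .
  have "(1 / (g a + 1)) *\<^sub>R a \<in> C"
    using admissible_scaleR[OF g, of "1 / (g a + 1)" a] ga by (simp add: C_def)
  then have "inner a a / (g a + 1) \<le> b" using ab(2)[of "(1 / (g a + 1)) *\<^sub>R a"] by simp
  moreover have "0 < inner a a" using ab(1) by simp
  ultimately have b: "0 < b" using divide_pos_pos[of "inner a a" "g a + 1"] ga by linarith
  have "inner (a /\<^sub>R b) v \<le> g v" for v
  proof (rule dense_ge)
    fix s assume s: "g v < s"
    then have "0 < s" using admissible_nonneg[OF g, of v] by linarith
    moreover have "g (v /\<^sub>R s) = g v / s"
      using admissible_scaleR[OF g, of "inverse s" v] \<open>0 < s\<close> by (simp add: field_simps)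
    ultimately have "g (v /\<^sub>R s) < 1" using s by simp
    then have "inner a v / s \<le> b"
      using ab(2)[of "v /\<^sub>R s"] by (simp add: C_def divide_inverse mult.commute)
    then show "inner (a /\<^sub>R b) v \<le> s" using b \<open>0 < s\<close> by (simp add: field_simps)
  qed
  moreover have "g w \<le> inner (a /\<^sub>R b) w"
    using ab(3) b admissible_pos[OF g False] by (simp add: field_simps)
  ultimately show ?thesis by (rule that)
qed

lemma wulff_inner_approx:
  fixes g :: "'a::euclidean_space \<Rightarrow> real"
  assumes g: "admissible g" and "0 < \<epsilon>"
  obtains y where "y \<in> wulff g" "g w - \<epsilon> < inner y w"
proof (cases "w = 0")
  case True
  then show ?thesis using that zero_in_wulff[OF g] admissible_zero[OF g] \<open>0 < \<epsilon>\<close> by simp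
next
  case False
  obtain p where p: "\<And>v. inner p v \<le> g v" "g w \<le> inner p w"
    using admissible_subgradient[OF g] by blast
  have gw: "0 < g w" using admissible_pos[OF g False] .
  define l where "l = max 0 (1 - \<epsilon> / (2 * g w))"
  have l: "0 \<le> l" "l < 1" using \<open>0 < \<epsilon>\<close> gw by (auto simp: l_def)
  have "inner (l *\<^sub>R p) v < g v" if "v \<noteq> 0" for v
    using mult_left_mono[OF p(1)[of v] l(1)] admissible_pos[OF g that] l(2)
    by (simp add: mult_less_cancel_right2 order_le_less_trans)
  then have "l *\<^sub>R p \<in> wulff g" by (simp add: mem_wulff_iff[OF g])
  moreover have "g w - \<epsilon> < l * g w"
    using \<open>0 < \<epsilon>\<close> gw by (auto simp: l_def field_simps max_def)
  then have "g w - \<epsilon> < inner (l *\<^sub>R p) w"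
    using mult_left_mono[OF p(2) l(1)] by simp
  ultimately show ?thesis by (rule that)
qed

section \<open>Slices\<close>

lemma open_slice:
  fixes E :: "('a::topological_space \<times> real) set"
  assumes "open E" shows "open (slice E t)"
proof -
  have "slice E t = (\<lambda>x. (x, t)) -` E" by (auto simp: slice_def)
  also have "open \<dots>" by (intro continuous_open_vimage assms continuous_intros)
  finally show ?thesis .
qed

lemma bounded_slice:
  fixes E :: "('a::real_normed_vector \<times> real) set"
  assumes "bounded E" shows "bounded (slice E t)"
proof -
  obtain B where "\<And>x. x \<in> E \<Longrightarrow> norm x \<le> B" using assms bounded_iff by blast
  then have "norm y \<le> B" if "y \<in> slice E t" for y
    using that norm_fst_le[of y t] by (force simp: slice_def)
  then show ?thesis unfolding bounded_iff by blast
qed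

lemma admissible_exists_greater_in_open:
  fixes D :: "'a::euclidean_space \<Rightarrow> real"
  assumes D: "admissible D" and S: "open S" "x \<in> S"
  obtains z where "z \<in> S" "D x < D z"
proof -
  obtain \<epsilon> where \<epsilon>: "0 < \<epsilon>" "ball x \<epsilon> \<subseteq> S" using openE[OF S] by blast
  show ?thesis
  proof (cases "x = 0")
    case True
    obtain e :: 'a where e: "norm e = 1" using norm_Basis nonempty_Basis by blast
    then have "dist x ((\<epsilon> / 2) *\<^sub>R e) < \<epsilon>" using True \<epsilon>(1) by simp
    then have "(\<epsilon> / 2) *\<^sub>R e \<in> S" using \<epsilon>(2) by auto
    moreover have "(\<epsilon> / 2) *\<^sub>R e \<noteq> 0" using e \<epsilon>(1) by auto
    then have "D x < D ((\<epsilon> / 2) *\<^sub>R e)"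
      using admissible_pos[OF D] admissible_zero[OF D] True by simp
    ultimately show ?thesis by (rule that)
  next
    case False
    define \<delta> where "\<delta> = \<epsilon> / (2 * norm x)"
    have \<delta>: "0 < \<delta>" using False \<epsilon>(1) by (simp add: \<delta>_def)
    have "dist x ((1 + \<delta>) *\<^sub>R x) = \<delta> * norm x"
      using \<delta> by (simp add: dist_norm algebra_simps)
    also have "\<dots> < \<epsilon>" using False \<epsilon>(1) by (simp add: \<delta>_def)
    finally have "(1 + \<delta>) *\<^sub>R x \<in> S" using \<epsilon>(2) by auto
    moreover have "D x < D ((1 + \<delta>) *\<^sub>R x)"
      using admissible_scaleR[OF D, of "1 + \<delta>" x] admissible_pos[OF D False] \<delta>
      by (simp add: distrib_right)
    ultimately show ?thesis by (rule that)
  qed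
qed

lemma open_downward_closed_eq_sublevel:
  fixes D :: "'a::euclidean_space \<Rightarrow> real"
  assumes D: "admissible D" and S: "open S" "bounded S" "S \<noteq> {}"
    and down: "\<And>y z. z \<in> S \<Longrightarrow> D y \<le> D z \<Longrightarrow> y \<in> S"
  shows "0 < (SUP z\<in>S. D z)" "S = {y. D y < (SUP z\<in>S. D z)}"
proof -
  obtain M where M: "\<And>y. D y \<le> M * norm y" using admissible_norm_bounds(2)[OF D] by blast
  obtain B where B: "\<And>y. y \<in> S \<Longrightarrow> norm y \<le> B" using S(2) bounded_iff by blast
  have "bdd_above (D ` S)"
  proof (rule bdd_aboveI2)
    fix y assume "y \<in> S"
    show "D y \<le> \<bar>M\<bar> * B"
      using M[of y] B[OF \<open>y \<in> S\<close>] abs_ge_self[of M]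
      by (smt (verit, best) mult_mono norm_ge_zero abs_ge_zero)
  qed
  note sup = less_cSUP_iff[OF S(3) this]
  have less_sup: "D y < (SUP z\<in>S. D z)" if "y \<in> S" for y
    using admissible_exists_greater_in_open[OF D S(1) that] sup by blast
  show "S = {y. D y < (SUP z\<in>S. D z)}"
  proof (intro set_eqI iffI)
    fix y assume "y \<in> {y. D y < (SUP z\<in>S. D z)}"
    then obtain z where "z \<in> S" "D y < D z" using sup by auto
    then show "y \<in> S" using down less_imp_le by blast
  qed (use less_sup in blast)
  obtain y where "y \<in> S" using S(3) by blast
  then show "0 < (SUP z\<in>S. D z)"
    using less_sup admissible_nonneg[OF D, of y] by fastforce
qed

lemma concave_on_slice_radius:
  fixes K :: "('a::euclidean_space \<times> real) set"
  assumes K: "convex K" and D: "admissible D"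
    and pos: "\<And>t. 0 < \<alpha> t \<Longrightarrow> slice K t = {y. D y < \<alpha> t}"
    and nonpos: "\<And>t. \<not> 0 < \<alpha> t \<Longrightarrow> slice K t = {}"
  shows "concave_on {t. 0 < \<alpha> t} \<alpha>"
proof -
  obtain p where p: "D p = 1" using admissible_exists_eq_1[OF D] by blast
  have mem: "(r *\<^sub>R p, t) \<in> K \<longleftrightarrow> 0 < \<alpha> t \<and> r < \<alpha> t" if "0 \<le> r" for r t
  proof -
    have "(r *\<^sub>R p, t) \<in> K \<longleftrightarrow> r *\<^sub>R p \<in> slice K t" by (simp add: slice_def)
    then show ?thesis
      using pos[of t] nonpos[of t] admissible_scaleR_nonneg[OF D that, of p] p
      by (cases "0 < \<alpha> t") auto
  qed
  have comb: "0 < \<alpha> (u * t1 + v * t2) \<and> u * r1 + v * r2 < \<alpha> (u * t1 + v * t2)"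
    if "0 \<le> r1" "r1 < \<alpha> t1" "0 \<le> r2" "r2 < \<alpha> t2" "0 \<le> u" "0 \<le> v" "u + v = 1"
    for r1 r2 t1 t2 u v
  proof -
    have "u *\<^sub>R (r1 *\<^sub>R p, t1) + v *\<^sub>R (r2 *\<^sub>R p, t2) \<in> K"
      using that mem by (intro convexD[OF K]) auto
    moreover have "u *\<^sub>R (r1 *\<^sub>R p, t1) + v *\<^sub>R (r2 *\<^sub>R p, t2)
        = ((u * r1 + v * r2) *\<^sub>R p, u * t1 + v * t2)"
      by (simp add: algebra_simps)
    ultimately show ?thesis using mem[of "u * r1 + v * r2"] that by simp
  qed
  show ?thesis
    unfolding concave_on_iff
  proof (intro conjI ballI allI impI)
    show "convex {t. 0 < \<alpha> t}"
      unfolding convex_def using comb[of 0 _ 0] by simp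
  next
    fix t1 t2 u v :: real
    assume t: "t1 \<in> {t. 0 < \<alpha> t}" "t2 \<in> {t. 0 < \<alpha> t}" and uv: "0 \<le> u" "0 \<le> v" "u + v = 1"
    show "u * \<alpha> t1 + v * \<alpha> t2 \<le> \<alpha> (u *\<^sub>R t1 + v *\<^sub>R t2)"
    proof (rule field_le_mult_one_interval)
      fix s :: real assume "0 < s" "s < 1"
      then show "s * (u * \<alpha> t1 + v * \<alpha> t2) \<le> \<alpha> (u *\<^sub>R t1 + v *\<^sub>R t2)"
        using comb[of "s * \<alpha> t1" t1 "s * \<alpha> t2" t2 u v] t uv
        by (simp add: algebra_simps mult_less_cancel_right2)
    qed
  qed
qed

section \<open>Radial dependence and scaled slices\<close>

context
  fixes f :: "'a::euclidean_space \<times> real \<Rightarrow> real" and h :: "'a \<Rightarrow> real"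
  assumes f: "admissible f" and h: "admissible h"
    and radial: "\<And>v v' s. h v = h v' \<Longrightarrow> f (v, s) = f (v', s)"
begin

lemma mem_slice_wulff_iff:
  "y \<in> slice (wulff f) t \<longleftrightarrow> (\<forall>v s. (v, s) \<noteq> 0 \<longrightarrow> h v * polar h y + t * s < f (v, s))"
proof -
  have "y \<in> slice (wulff f) t \<longleftrightarrow> (\<forall>v s. (v, s) \<noteq> 0 \<longrightarrow> inner y v + t * s < f (v, s))"
    by (simp add: slice_def mem_wulff_iff[OF f])
  also have "\<dots> \<longleftrightarrow> (\<forall>v s. (v, s) \<noteq> 0 \<longrightarrow> h v * polar h y + t * s < f (v, s))"
  proof (intro iffI allI impI)
    fix v :: 'a and s :: real
    assume H: "\<forall>v s. (v, s) \<noteq> 0 \<longrightarrow> inner y v + t * s < f (v, s)" and "(v, s) \<noteq> 0"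
    obtain u where u: "h u = h v" "inner y u = h v * polar h y"
      using polar_attained[OF h admissible_nonneg[OF h]] by blast
    have "u = 0 \<longleftrightarrow> v = 0" using u(1) admissible_eq_0_iff[OF h] by metis
    then have "(u, s) \<noteq> 0" using \<open>(v, s) \<noteq> 0\<close> by (simp add: zero_prod_def)
    then have "inner y u + t * s < f (u, s)" using H by blast
    then show "h v * polar h y + t * s < f (v, s)" using u radial[OF u(1)] by simp
  next
    fix v :: 'a and s :: real
    assume H: "\<forall>v s. (v, s) \<noteq> 0 \<longrightarrow> h v * polar h y + t * s < f (v, s)" and "(v, s) \<noteq> 0"
    have "inner y v + t * s \<le> h v * polar h y + t * s" using inner_le_polar[OF h] by simp
    also have "\<dots> < f (v, s)" using H \<open>(v, s) \<noteq> 0\<close> by blast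
    finally show "inner y v + t * s < f (v, s)" .
  qed
  finally show ?thesis .
qed

lemma slice_wulff_downward_closed:
  assumes z: "z \<in> slice (wulff f) t" and le: "polar h y \<le> polar h z"
  shows "y \<in> slice (wulff f) t"
  unfolding mem_slice_wulff_iff
proof (intro allI impI)
  fix v :: 'a and s :: real assume "(v, s) \<noteq> 0"
  then have "h v * polar h z + t * s < f (v, s)" using z unfolding mem_slice_wulff_iff by blast
  moreover have "h v * polar h y \<le> h v * polar h z"
    using mult_left_mono[OF le admissible_nonneg[OF h]] .
  ultimately show "h v * polar h y + t * s < f (v, s)" by linarith
qed

lemma wulff_slices_of_radial:
  "\<exists>\<alpha>. (\<forall>t. 0 \<le> \<alpha> t) \<and> concave_on {t. \<alpha> t > 0} \<alpha> \<and>
     (\<forall>t. \<alpha> t = 0 \<longrightarrow> slice (wulff f) t = {}) \<and>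
     (\<forall>t. \<alpha> t \<noteq> 0 \<longrightarrow> slice (wulff f) t = (\<lambda>y. \<alpha> t *\<^sub>R y) ` wulff h)"
proof -
  define S where "S t = slice (wulff f) t" for t
  define \<alpha> where "\<alpha> t = (if S t = {} then 0 else SUP y\<in>S t. polar h y)" for t
  have sublevel: "0 < \<alpha> t \<and> S t = {y. polar h y < \<alpha> t}" if "S t \<noteq> {}" for t
  proof -
    have "\<alpha> t = (SUP y\<in>S t. polar h y)" using that by (simp add: \<alpha>_def)
    then show ?thesis
      using open_downward_closed_eq_sublevel[OF admissible_polar[OF h]
          open_slice[OF open_wulff[OF f]] bounded_slice[OF bounded_wulff[OF f]] that[unfolded S_def]
          slice_wulff_downward_closed]
      unfolding S_def by simp
  qed
  have empty_iff: "S t = {} \<longleftrightarrow> \<not> 0 < \<alpha> t" for t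
    using sublevel[of t] by (cases "S t = {}") (simp_all add: \<alpha>_def)
  have pos: "slice (wulff f) t = {y. polar h y < \<alpha> t}" if "0 < \<alpha> t" for t
    using that sublevel empty_iff unfolding S_def by blast
  have nonpos: "slice (wulff f) t = {}" if "\<not> 0 < \<alpha> t" for t
    using that empty_iff unfolding S_def by blast
  show ?thesis
  proof (intro exI[of _ \<alpha>] conjI allI impI)
    show "0 \<le> \<alpha> t" for t using empty_iff[of t] by (cases "S t = {}") (simp_all add: \<alpha>_def)
    show "concave_on {t. 0 < \<alpha> t} \<alpha>"
      by (rule concave_on_slice_radius[OF convex_wulff[OF f] admissible_polar[OF h] pos nonpos])
    show "slice (wulff f) t = {}" if "\<alpha> t = 0" for t using that nonpos by simp
    show "slice (wulff f) t = (\<lambda>y. \<alpha> t *\<^sub>R y) ` wulff h" if "\<alpha> t \<noteq> 0" for t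
    proof -
      have "0 < \<alpha> t"
      proof (rule ccontr)
        assume "\<not> 0 < \<alpha> t"
        then have "S t = {}" using empty_iff by blast
        then show False using that by (simp add: \<alpha>_def)
      qed
      then have "slice (wulff f) t = (\<lambda>y. \<alpha> t *\<^sub>R y) ` {y. polar h y < 1}"
        using pos sublevel_less_eq_scaleR[OF admissible_polar[OF h]] by blast
      then show ?thesis by (simp add: wulff_eq_polar_less[OF h])
    qed
  qed
qed

end

lemma lsc_on_if_continuous_on: "continuous_on S g \<Longrightarrow> lsc_on S g"
  unfolding lsc_on_def continuous_on_def using order_tendstoD(1) by blast

lemma exists_inner_pos_in_open:
  fixes S :: "'a::real_inner set"
  assumes "open S" "0 \<in> S" "x \<noteq> 0"
  obtains k where "k \<in> S" "0 < inner x k"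
proof -
  obtain r where r: "0 < r" "ball 0 r \<subseteq> S" using openE[OF assms(1,2)] by blast
  define k where "k = (r / (2 * norm x)) *\<^sub>R x"
  have "norm k = r / 2" using assms(3) r(1) by (simp add: k_def)
  then have "k \<in> S" using r by auto
  moreover have "0 < inner x k" using assms(3) r(1) by (simp add: k_def)
  ultimately show ?thesis by (rule that)
qed

lemma wulff_slices_scaled_imp_mono:
  fixes f :: "'a::euclidean_space \<times> real \<Rightarrow> real" and Kh :: "'a set"
  assumes f: "admissible f" and Kh: "bounded Kh" "Kh \<noteq> {}"
    and slices: "\<And>t. slice (wulff f) t \<noteq> {} \<Longrightarrow> \<exists>a>0. slice (wulff f) t = (\<lambda>y. a *\<^sub>R y) ` Kh"
    and le: "support_fun Kh x \<le> support_fun Kh y"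
  shows "f (x, r) \<le> f (y, r)"
proof (rule field_le_epsilon)
  fix \<epsilon> :: real assume "0 < \<epsilon>"
  then obtain z t where zt: "(z, t) \<in> wulff f" "f (x, r) - \<epsilon> / 2 < inner (z, t) (x, r)"
    using wulff_inner_approx[OF f, of "\<epsilon> / 2" "(x, r)"] by (metis half_gt_zero prod.exhaust)
  then have "z \<in> slice (wulff f) t" by (simp add: slice_def)
  then obtain a where a: "0 < a" "slice (wulff f) t = (\<lambda>y. a *\<^sub>R y) ` Kh"
    using slices by blast
  then obtain k where k: "k \<in> Kh" "z = a *\<^sub>R k" using \<open>z \<in> slice (wulff f) t\<close> by blast
  obtain k' where k': "k' \<in> Kh" "support_fun Kh y - \<epsilon> / (2 * a) < inner y k'"
    using less_support_fun_iff[OF Kh, of "support_fun Kh y - \<epsilon> / (2 * a)" y] \<open>0 < \<epsilon>\<close> a(1)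
    by auto
  have "(a *\<^sub>R k', t) \<in> wulff f" using a(2) k'(1) by (auto simp: slice_def)
  have "f (x, r) - \<epsilon> / 2 < a * inner x k + t * r"
    using zt(2) k(2) by (simp add: inner_commute mult.commute)
  also have "\<dots> \<le> a * support_fun Kh y + t * r"
    using inner_le_support_fun[OF Kh(1) k(1), of x] le a(1) by simp
  also have "\<dots> < a * inner y k' + t * r + \<epsilon> / 2"
    using k'(2) a(1) by (simp add: field_simps)
  also have "a * inner y k' + t * r = inner (a *\<^sub>R k', t) (y, r)"
    by (simp add: inner_commute)
  also have "\<dots> \<le> f (y, r)"
    by (rule inner_le_if_mem_wulff[OF f \<open>(a *\<^sub>R k', t) \<in> wulff f\<close>])
  finally show "f (x, r) \<le> f (y, r) + \<epsilon>" by simp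
qed

lemma symmetrizable_if_radial:
  fixes f :: "'a::euclidean_space \<times> real \<Rightarrow> real"
  assumes f: "admissible f" and g: "admissible g"
    and radial: "\<And>x y r. g x = g y \<Longrightarrow> f (x, r) = f (y, r)"
  shows "symmetrizable f"
proof -
  obtain u where u: "g u = 1" using admissible_exists_eq_1[OF g] by blast
  define L where "L p = (fst p *\<^sub>R u, snd p)" for p :: "real \<times> real"
  define \<phi> where "\<phi> = f \<circ> L"
  have "linear L" unfolding L_def by (intro linearI) (auto simp: algebra_simps)
  then have "continuous_on UNIV \<phi>"
    unfolding \<phi>_def
    using continuous_on_compose2[OF admissible_continuous_on[OF f]
        linear_continuous_on[OF linear_conv_bounded_linear[THEN iffD1, OF \<open>linear L\<close>]]]
    by (simp add: comp_def)
  then have "lsc_on ({0..} \<times> UNIV) \<phi>"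
    by (rule lsc_on_if_continuous_on[OF continuous_on_subset]) simp
  moreover have "convex_on UNIV \<phi>"
  proof (rule convex_onI)
    fix t :: real and p q :: "real \<times> real" assume "0 < t" "t < 1"
    then show "\<phi> ((1 - t) *\<^sub>R p + t *\<^sub>R q) \<le> (1 - t) * \<phi> p + t * \<phi> q"
      using convex_onD[OF admissible_convex_on[OF f], of t "L p" "L q"]
        linear_add[OF \<open>linear L\<close>] linear_scale[OF \<open>linear L\<close>]
      unfolding \<phi>_def by simp
  qed simp
  then have "convex_on ({0..} \<times> UNIV) \<phi>"
    by (rule convex_on_subset) (auto intro: convex_Times)
  moreover have "0 \<le> \<phi> p" for p using admissible_nonneg[OF f] by (simp add: \<phi>_def)
  moreover have "f (x', xN) = \<phi> (g x', xN)" for x' xN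
  proof -
    have "g (g x' *\<^sub>R u) = g x'"
      using admissible_scaleR_nonneg[OF g admissible_nonneg[OF g]] u by simp
    then show ?thesis using radial[of x' "g x' *\<^sub>R u" xN] by (simp add: \<phi>_def L_def)
  qed
  ultimately have "sym_repr f g \<phi>"
    unfolding sym_repr_def using lsc_on_if_continuous_on[OF admissible_continuous_on[OF g]] g
    by blast
  then show ?thesis using f unfolding symmetrizable_def by blast
qed

lemma symmetrizable_if_wulff_slices:
  fixes f :: "'a::euclidean_space \<times> real \<Rightarrow> real" and Kh :: "'a set"
  assumes f: "admissible f" and Kh: "open Kh" and \<alpha>: "\<And>t. 0 \<le> \<alpha> t"
    and zero: "\<And>t. \<alpha> t = 0 \<Longrightarrow> slice (wulff f) t = {}"
    and nonzero: "\<And>t. \<alpha> t \<noteq> 0 \<Longrightarrow> slice (wulff f) t = (\<lambda>y. \<alpha> t *\<^sub>R y) ` Kh"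
  shows "symmetrizable f"
proof -
  have "0 \<in> slice (wulff f) 0" using zero_in_wulff[OF f] by (simp add: slice_def zero_prod_def)
  then have "\<alpha> 0 \<noteq> 0" using zero by blast
  then have slice0: "slice (wulff f) 0 = (\<lambda>y. \<alpha> 0 *\<^sub>R y) ` Kh" by (rule nonzero)
  have "Kh = (\<lambda>y. inverse (\<alpha> 0) *\<^sub>R y) ` slice (wulff f) 0"
    using \<open>\<alpha> 0 \<noteq> 0\<close> unfolding slice0 image_image by simp
  then have "bounded Kh"
    using bounded_scaling[OF bounded_slice[OF bounded_wulff[OF f]]] by metis
  have "0 \<in> Kh" using \<open>0 \<in> slice (wulff f) 0\<close> \<open>\<alpha> 0 \<noteq> 0\<close> unfolding slice0 by auto
  then have "Kh \<noteq> {}" by blast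
  have adm: "admissible (support_fun Kh)"
    using admissible_support_fun[OF \<open>bounded Kh\<close> \<open>Kh \<noteq> {}\<close>]
      exists_inner_pos_in_open[OF Kh \<open>0 \<in> Kh\<close>] by blast
  have "\<exists>a>0. slice (wulff f) t = (\<lambda>y. a *\<^sub>R y) ` Kh" if "slice (wulff f) t \<noteq> {}" for t
    using that zero nonzero \<alpha>[of t] by (metis order_le_less)
  note mono = wulff_slices_scaled_imp_mono[OF f \<open>bounded Kh\<close> \<open>Kh \<noteq> {}\<close> this]
  show ?thesis
    by (rule symmetrizable_if_radial[OF f adm]) (use mono in \<open>simp add: order_antisym\<close>)
qed

theorem mainTheorem1:
  fixes dummy :: "'a::euclidean_space"
  shows
  "(\<forall>(f :: 'a \<times> real \<Rightarrow> real) h \<phi>. admissible f \<and> sym_repr f h \<phi> \<longrightarrow>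
      (\<exists>\<alpha> :: real \<Rightarrow> real. (\<forall>t. 0 \<le> \<alpha> t) \<and> concave_on {t. \<alpha> t > 0} \<alpha> \<and>
         (\<forall>t. \<alpha> t = 0 \<longrightarrow> slice (wulff f) t = {}) \<and>
         (\<forall>t. \<alpha> t \<noteq> 0 \<longrightarrow> slice (wulff f) t = (\<lambda>y. \<alpha> t *\<^sub>R y) ` wulff h)))
   \<and>
   (\<forall>(f :: 'a \<times> real \<Rightarrow> real) (Kh :: 'a set) (\<alpha> :: real \<Rightarrow> real).
      lsc_on UNIV f \<and> admissible f \<and> open Kh \<and> convex Kh \<and>
      (\<forall>t. 0 \<le> \<alpha> t) \<and> concave_on {t. \<alpha> t > 0} \<alpha> \<and>
      (\<forall>t. \<alpha> t = 0 \<longrightarrow> slice (wulff f) t = {}) \<and>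
      (\<forall>t. \<alpha> t \<noteq> 0 \<longrightarrow> slice (wulff f) t = (\<lambda>y. \<alpha> t *\<^sub>R y) ` Kh)
      \<longrightarrow> symmetrizable f)"
proof (intro conjI allI impI; elim conjE)
  fix f :: "'a \<times> real \<Rightarrow> real" and h \<phi>
  assume f: "admissible f" and "sym_repr f h \<phi>"
  then have "admissible h" and repr: "\<And>v s. f (v, s) = \<phi> (h v, s)"
    unfolding sym_repr_def by blast+
  have "f (v, s) = f (v', s)" if "h v = h v'" for v v' s using repr that by simp
  then show "\<exists>\<alpha>. (\<forall>t. 0 \<le> \<alpha> t) \<and> concave_on {t. \<alpha> t > 0} \<alpha> \<and>
      (\<forall>t. \<alpha> t = 0 \<longrightarrow> slice (wulff f) t = {}) \<and>
      (\<forall>t. \<alpha> t \<noteq> 0 \<longrightarrow> slice (wulff f) t = (\<lambda>y. \<alpha> t *\<^sub>R y) ` wulff h)"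
    using wulff_slices_of_radial[OF f \<open>admissible h\<close>] by blast
next
  fix f :: "'a \<times> real \<Rightarrow> real" and Kh :: "'a set" and \<alpha> :: "real \<Rightarrow> real"
  assume "admissible f" "open Kh" "\<forall>t. 0 \<le> \<alpha> t"
    "\<forall>t. \<alpha> t = 0 \<longrightarrow> slice (wulff f) t = {}"
    "\<forall>t. \<alpha> t \<noteq> 0 \<longrightarrow> slice (wulff f) t = (\<lambda>y. \<alpha> t *\<^sub>R y) ` Kh"
  then show "symmetrizable f" using symmetrizable_if_wulff_slices by blast
qed

end
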